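(* Consider the Basilica replacement rule. Let $n\in\mathbb{N}$ and let $O_n$ be the graph with $n+3$ vertices and $2n+4$ edges described below. Then the sublevel complex $K(O_n)_{2n+3}$ is empty; equivalently, for every rearrangement $X(O_n)\to X(G)$ the graph $G$ has at least $2n+4$ edges (so every graph obtained from $O_n$ by a finite sequence of simple expansions and contractions has at least $2n+4$ edges).
   Context: Basilica replacement rule $e\to R$: $e$ is an edge $v\to w$; $R$ has vertices $v,w,4$ and edges $1\colon v\to4$, a loop $2$ at $4$, $3\colon 4\to w$. A simple expansion $G\lhd\varepsilon$ of a finite directed graph $G$ at an edge $\varepsilon$ (loops allowed) deletes $\varepsilon$ and inserts a new vertex $\varepsilon4$ with edges $\varepsilon1$ from the initial vertex of $\varepsilon$ to $\varepsilon4$, a loop $\varepsilon2$ at $\varepsilon4$, and $\varepsilon3$ from $\varepsilon4$ to the terminal vertex of $\varepsilon$; a simple contraction is the reverse. The graph $O_n$: vertices $u_0,\dots,u_n,p,l$; for each $0\le i<n$ two edges $u_i\to u_{i+1}$ and $u_{i+1}\to u_i$; an edge $v\colon u_0\to p$ and a loop $w$ at $p$; an edge $a\colon u_n\to l$ and a loop $b$ at $l$. For a base graph $G$, $K(G)$ denotes the rearrangement cube complex: its $0$-cubes are range equivalence classes $[f]$ of rearrangements $f\colon X(G)\to X(G')$ (homeomorphisms of limit spaces given piecewise on cells by canonical prefix-replacement maps, equivalently represented by a graph isomorphism between an expansion of $G$ and an expansion of $G'$), with cubes spanned by $\{[\Delta_T\circ f]: T\subseteq S\}$ for $S\subseteq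 E(G')$, $\Delta_T$ denoting expansion of the edges in $T$. The rank of $[f]$ is $|E(G')|$, extended affinely over cubes, and $K(G)_m$ is the subcomplex spanned by $0$-cubes of rank $\le m$. *)

theory Defs
  imports Main
begin

text \<open>Finite directed multigraphs (loops and parallel edges allowed).
  Vertex and edge names are natural numbers (an unbounded supply of fresh names).\<close>

record dgraph =
  verts :: "nat set"
  edges :: "nat set"
  src   :: "nat \<Rightarrow> nat"
  tgt   :: "nat \<Rightarrow> nat"

definition wf_graph :: "dgraph \<Rightarrow> bool" where
  "wf_graph G \<longleftrightarrow> finite (verts G) \<and> finite (edges G) \<and>
     (\<forall>e\<in>edges G. src G e \<in> verts G \<and> tgt G e \<in> verts G)"

text \<open>Simple expansion of G at edge eps for the Basilica replacement rule:
  delete eps : v -> w, add a fresh vertex x (= eps4), fresh edges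
  e1 : v -> x, a loop e2 at x, and e3 : x -> w.\<close>

definition simple_expansion :: "dgraph \<Rightarrow> nat \<Rightarrow> dgraph \<Rightarrow> bool" where
  "simple_expansion G eps H \<longleftrightarrow> wf_graph G \<and> eps \<in> edges G \<and>
     (\<exists>x e1 e2 e3. x \<notin> verts G \<and> e1 \<notin> edges G \<and> e2 \<notin> edges G \<and> e3 \<notin> edges G \<and>
        e1 \<noteq> e2 \<and> e1 \<noteq> e3 \<and> e2 \<noteq> e3 \<and>
        verts H = insert x (verts G) \<and>
        edges H = (edges G - {eps}) \<union> {e1, e2, e3} \<and>
        (\<forall>e\<in>edges G - {eps}. src H e = src G e \<and> tgt H e = tgt G e) \<and>
        src H e1 = src G eps \<and> tgt H e1 = x \<and>
        src H e2 = x \<and> tgt H e2 = x \<and>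
        src H e3 = x \<and> tgt H e3 = tgt G eps)"

definition expansion :: "dgraph \<Rightarrow> dgraph \<Rightarrow> bool" where
  "expansion = (\<lambda>G H. \<exists>eps. simple_expansion G eps H)\<^sup>*\<^sup>*"

definition graph_iso :: "dgraph \<Rightarrow> dgraph \<Rightarrow> bool" where
  "graph_iso G H \<longleftrightarrow> (\<exists>fv fe. bij_betw fv (verts G) (verts H) \<and> bij_betw fe (edges G) (edges H) \<and>
     (\<forall>e\<in>edges G. src H (fe e) = fv (src G e) \<and> tgt H (fe e) = fv (tgt G e)))"

text \<open>A rearrangement X(G) -> X(H) exists iff some expansion of G is isomorphic
  to some expansion of H (combinatorial representation of rearrangements).\<close>

definition has_rearrangement :: "dgraph \<Rightarrow> dgraph \<Rightarrow> bool" where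
  "has_rearrangement G H \<longleftrightarrow> (\<exists>G' H'. expansion G G' \<and> expansion H H' \<and> graph_iso G' H')"

text \<open>Vertices: u_i = i (i \<le> n), p = n+1, l = n+2.
  Edges: 2i : u_i -> u_(i+1), 2i+1 : u_(i+1) -> u_i (i < n);
  v = 2n : u_0 -> p; w = 2n+1 loop at p; a = 2n+2 : u_n -> l; b = 2n+3 loop at l.\<close>

definition O_graph :: "nat \<Rightarrow> dgraph" where
  "O_graph n = \<lparr> verts = {0..n+2}, edges = {0..<2*n+4},
     src = (\<lambda>e. if e < 2*n then (if even e then e div 2 else e div 2 + 1)
                else if e = 2*n then 0
                else if e = 2*n+1 then n+1
                else if e = 2*n+2 then n
                else n+2),
     tgt = (\<lambda>e. if e < 2*n then (if even e then e div 2 + 1 else e div 2)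
                else if e = 2*n then n+1
                else if e = 2*n+1 then n+1
                else n+2) \<rparr>"

end

(* Simple expansions keep every old vertex together with its in- and out-degree and add a
   vertex of in- and out-degree 2; isomorphisms preserve everything.  In O_n the loop vertices
   p and l have degrees (2,1), u_0 and u_n have degrees (1,2) and are joined by two
   edge-disjoint paths, and every inner u_i is a (2,2)-vertex separating u_0 from u_n.
   All of this survives simple expansions in both directions: the vertex created on an
   edge eps separates two old vertices only if eps is a bridge between them, which the two
   edge-disjoint paths exclude.  So a graph G reachable from O_n by a rearrangement has two
   (2,1)-vertices, two (1,2)-vertices and n-1 further (2,2)-vertices, and summing in-degrees
   gives at least 2+2+1+1+2(n-1) = 2n+4 edges. *)

theory Submission
  imports Defs
begin

lemma rtranclp_map:
  assumes "\<And>a b. R a b \<Longrightarrow> S\<^sup>*\<^sup>* (f a) (f b)" and "R\<^sup>*\<^sup>* a b"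
  shows "S\<^sup>*\<^sup>* (f a) (f b)"
  using assms(2) by induction (auto intro: rtranclp_trans assms(1))

lemma card_insert_Diff_singleton:
  assumes "a \<in> A" and "finite A" and "b \<notin> A"
  shows "card (insert b (A - {a})) = card A"
  using assms by (metis card_Suc_Diff1 card_insert_disjoint finite_Diff insert_Diff insert_iff)

section \<open>Degrees and undirected connectivity\<close>

definition indeg :: "dgraph \<Rightarrow> nat \<Rightarrow> nat" where
  "indeg G y = card {e \<in> edges G. tgt G e = y}"

definition outdeg :: "dgraph \<Rightarrow> nat \<Rightarrow> nat" where
  "outdeg G y = card {e \<in> edges G. src G e = y}"

definition linked :: "dgraph \<Rightarrow> nat set \<Rightarrow> nat \<Rightarrow> nat \<Rightarrow> bool" where
  "linked G F a b \<longleftrightarrow> (\<exists>e\<in>F. src G e = a \<and> tgt G e = b \<or> src G e = b \<and> tgt G e = a)"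

abbreviation connected_via :: "dgraph \<Rightarrow> nat set \<Rightarrow> nat \<Rightarrow> nat \<Rightarrow> bool" where
  "connected_via G F \<equiv> (linked G F)\<^sup>*\<^sup>*"

definition edges_avoiding :: "dgraph \<Rightarrow> nat \<Rightarrow> nat set" where
  "edges_avoiding G z = {e \<in> edges G. src G e \<noteq> z \<and> tgt G e \<noteq> z}"

definition bridgeless_between :: "dgraph \<Rightarrow> nat \<Rightarrow> nat \<Rightarrow> bool" where
  "bridgeless_between G a b \<longleftrightarrow> (\<forall>f\<in>edges G. connected_via G (edges G - {f}) a b)"

definition separates :: "dgraph \<Rightarrow> nat \<Rightarrow> nat \<Rightarrow> nat \<Rightarrow> bool" where
  "separates G z a b \<longleftrightarrow> \<not> connected_via G (edges_avoiding G z) a b"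

lemma connected_via_mono:
  assumes "F \<subseteq> F'" and "connected_via G F a b"
  shows "connected_via G F' a b"
proof -
  have "linked G F \<le> linked G F'"
    using assms(1) unfolding linked_def by blast
  then show ?thesis
    using assms(2) by (rule rtranclp_mono[THEN predicate2D])
qed

lemma linked_sym: "linked G F a b \<Longrightarrow> linked G F b a"
  unfolding linked_def by blast

lemma card_edges_eq_sum_indeg:
  assumes "wf_graph G"
  shows "card (edges G) = (\<Sum>y\<in>verts G. indeg G y)"
proof -
  have "edges G = (\<Union>y\<in>verts G. {e \<in> edges G. tgt G e = y})"
    using assms by (auto simp: wf_graph_def)
  also have "card \<dots> = (\<Sum>y\<in>verts G. indeg G y)"
    unfolding indeg_def using assms by (intro card_UN_disjoint) (auto simp: wf_graph_def)
  finally show ?thesis .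
qed

lemma sum_indeg_le_card_edges:
  assumes "wf_graph G" and "S \<subseteq> verts G"
  shows "(\<Sum>y\<in>S. indeg G y) \<le> card (edges G)"
  unfolding card_edges_eq_sum_indeg[OF assms(1)]
  using assms by (intro sum_mono2) (auto simp: wf_graph_def)

section \<open>Rearrangement invariants that force many edges\<close>

definition two_pendant_loops :: "dgraph \<Rightarrow> bool" where
  "two_pendant_loops G \<longleftrightarrow> (\<exists>p l. p \<in> verts G \<and> l \<in> verts G \<and> p \<noteq> l \<and>
     indeg G p = 2 \<and> outdeg G p = 1 \<and> indeg G l = 2 \<and> outdeg G l = 1)"

definition separated_pair :: "nat \<Rightarrow> dgraph \<Rightarrow> bool" where
  "separated_pair k G \<longleftrightarrow> (\<exists>s t Z. s \<in> verts G \<and> t \<in> verts G \<and> s \<noteq> t \<and>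
     indeg G s = 1 \<and> outdeg G s = 2 \<and> indeg G t = 1 \<and> outdeg G t = 2 \<and>
     bridgeless_between G s t \<and> Z \<subseteq> verts G \<and> k \<le> card Z \<and>
     (\<forall>z\<in>Z. indeg G z = 2 \<and> outdeg G z = 2 \<and> separates G z s t))"

lemma card_edges_ge_4_if_two_pendant_loops:
  assumes "wf_graph G" and "two_pendant_loops G"
  shows "4 \<le> card (edges G)"
proof -
  obtain p l where "p \<in> verts G" "l \<in> verts G" "p \<noteq> l" "indeg G p = 2" "indeg G l = 2"
    using assms(2) unfolding two_pendant_loops_def by blast
  then show ?thesis
    using sum_indeg_le_card_edges[OF assms(1), of "{p, l}"] by simp
qed

lemma card_edges_ge_if_separated_pair:
  assumes "wf_graph G" and "two_pendant_loops G" and "separated_pair k G"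
  shows "2 * k + 6 \<le> card (edges G)"
proof -
  obtain p l where pl: "p \<in> verts G" "l \<in> verts G" "p \<noteq> l"
      "indeg G p = 2" "outdeg G p = 1" "indeg G l = 2" "outdeg G l = 1"
    using assms(2) unfolding two_pendant_loops_def by blast
  obtain s t Z where st: "s \<in> verts G" "t \<in> verts G" "s \<noteq> t"
      "indeg G s = 1" "outdeg G s = 2" "indeg G t = 1" "outdeg G t = 2"
    and Z: "Z \<subseteq> verts G" "k \<le> card Z" "\<forall>z\<in>Z. indeg G z = 2 \<and> outdeg G z = 2"
    using assms(3) unfolding separated_pair_def by blast
  have "finite Z"
    using Z(1) assms(1) finite_subset unfolding wf_graph_def by blast
  moreover have "{s, t, p, l} \<inter> Z = {}"
    using pl st Z(3) by fastforce
  moreover have "distinct [s, t, p, l]"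
    using pl st by auto
  ultimately have "(\<Sum>y\<in>{s, t, p, l} \<union> Z. indeg G y) = 6 + 2 * card Z"
    using pl st Z(3) by (simp add: sum.union_disjoint)
  moreover have "(\<Sum>y\<in>{s, t, p, l} \<union> Z. indeg G y) \<le> card (edges G)"
    using pl st Z(1) by (intro sum_indeg_le_card_edges[OF assms(1)]) auto
  ultimately show ?thesis
    using Z(2) by linarith
qed

lemma simple_expansion_wf_graph:
  assumes "simple_expansion G eps H"
  shows "wf_graph H"
  using assms unfolding simple_expansion_def wf_graph_def by (auto 0 3)

lemma rearrangement_invariant:
  assumes expansion_invariant: "\<And>G eps H. simple_expansion G eps H \<Longrightarrow> P G \<longleftrightarrow> P H"
    and iso_invariant: "\<And>G H. wf_graph G \<Longrightarrow> graph_iso G H \<Longrightarrow> P G \<Longrightarrow> P H"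
    and "wf_graph G" and "has_rearrangement G H" and "P G"
  shows "P H"
proof -
  obtain G' H' where G': "expansion G G'" and H': "expansion H H'" and iso: "graph_iso G' H'"
    using assms(4) unfolding has_rearrangement_def by blast
  have "wf_graph G' \<and> P G'"
    using G' assms(3,5) unfolding expansion_def
    by induction (auto simp: simple_expansion_wf_graph expansion_invariant)
  then have "P H'"
    using iso iso_invariant by blast
  with H' show "P H"
    unfolding expansion_def
    by (induction rule: converse_rtranclp_induct) (auto simp: expansion_invariant)
qed

section \<open>Invariance under simple expansions\<close>

locale expansion_step =
  fixes G H :: dgraph and eps x e1 e2 e3 :: nat
  assumes wf: "wf_graph G" and eps: "eps \<in> edges G"
    and x: "x \<notin> verts G" and e1: "e1 \<notin> edges G" and e2: "e2 \<notin> edges G" and e3: "e3 \<notin> edges G"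
    and e12: "e1 \<noteq> e2" and e13: "e1 \<noteq> e3" and e23: "e2 \<noteq> e3"
    and verts_H: "verts H = insert x (verts G)"
    and edges_H: "edges H = (edges G - {eps}) \<union> {e1, e2, e3}"
    and old: "\<forall>e\<in>edges G - {eps}. src H e = src G e \<and> tgt H e = tgt G e"
    and src1: "src H e1 = src G eps" and tgt1: "tgt H e1 = x"
    and src2: "src H e2 = x" and tgt2: "tgt H e2 = x"
    and src3: "src H e3 = x" and tgt3: "tgt H e3 = tgt G eps"

lemma simple_expansion_expansion_step:
  assumes "simple_expansion G eps H"
  obtains x e1 e2 e3 where "expansion_step G H eps x e1 e2 e3"
  using assms unfolding simple_expansion_def expansion_step_def by blast

context expansion_step
begin

lemma finite_edges: "finite (edges G)"
  using wf by (simp add: wf_graph_def)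

lemma ends_ne_x: "e \<in> edges G \<Longrightarrow> src G e \<noteq> x \<and> tgt G e \<noteq> x"
  using wf x unfolding wf_graph_def by blast

lemma indeg_old:
  assumes y: "y \<in> verts G"
  shows "indeg H y = indeg G y"
proof -
  let ?A = "{e \<in> edges G. tgt G e = y}"
  have "x \<noteq> y"
    using x y by blast
  then have "{e \<in> edges H. tgt H e = y} = (if tgt G eps = y then insert e3 (?A - {eps}) else ?A)"
    using old tgt1 tgt2 tgt3 e1 e2 e3 unfolding edges_H by auto
  moreover have "tgt G eps = y \<Longrightarrow> card (insert e3 (?A - {eps})) = card ?A"
    using eps e3 finite_edges by (intro card_insert_Diff_singleton) auto
  ultimately show ?thesis
    unfolding indeg_def by simp
qed

lemma outdeg_old:
  assumes y: "y \<in> verts G"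
  shows "outdeg H y = outdeg G y"
proof -
  let ?A = "{e \<in> edges G. src G e = y}"
  have "x \<noteq> y"
    using x y by blast
  then have "{e \<in> edges H. src H e = y} = (if src G eps = y then insert e1 (?A - {eps}) else ?A)"
    using old src1 src2 src3 e1 e2 e3 unfolding edges_H by auto
  moreover have "src G eps = y \<Longrightarrow> card (insert e1 (?A - {eps})) = card ?A"
    using eps e1 finite_edges by (intro card_insert_Diff_singleton) auto
  ultimately show ?thesis
    unfolding outdeg_def by simp
qed

lemma indeg_x: "indeg H x = 2"
proof -
  have "{e \<in> edges H. tgt H e = x} = {e1, e2}"
    using old tgt1 tgt2 tgt3 ends_ne_x ends_ne_x[OF eps] unfolding edges_H by auto
  then show ?thesis
    unfolding indeg_def using e12 by simp
qed

lemma outdeg_x: "outdeg H x = 2"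
proof -
  have "{e \<in> edges H. src H e = x} = {e2, e3}"
    using old src1 src2 src3 ends_ne_x ends_ne_x[OF eps] unfolding edges_H by auto
  then show ?thesis
    unfolding outdeg_def using e23 by simp
qed

lemma in_verts_G_if_degree_ne_2_2:
  assumes "y \<in> verts H" and "indeg H y \<noteq> 2 \<or> outdeg H y \<noteq> 2"
  shows "y \<in> verts G"
  using assms indeg_x outdeg_x verts_H by auto

context
  fixes F F' :: "nat set"
  assumes FG: "F \<subseteq> edges G" and FH: "F' \<subseteq> edges H"
    and same: "\<forall>e\<in>edges G - {eps}. e \<in> F' \<longleftrightarrow> e \<in> F"
    and eps_in: "eps \<in> F \<longleftrightarrow> e1 \<in> F' \<and> e3 \<in> F'"
begin

lemma connected_via_G_if_connected_via_H:
  assumes a: "a \<in> verts G" and b: "b \<in> verts G" and "connected_via H F' a b"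
  shows "connected_via G F a b"
proof -
  \<comment> \<open>Collapse x onto the end of eps to which it is still attached by e1.\<close>
  define \<pi> where "\<pi> y = (if y = x then (if e1 \<in> F' then src G eps else tgt G eps) else y)" for y
  have "connected_via G F (\<pi> u) (\<pi> v)" if step: "linked H F' u v" for u v
  proof -
    obtain e where e: "e \<in> F'" and uv: "src H e = u \<and> tgt H e = v \<or> src H e = v \<and> tgt H e = u"
      using step unfolding linked_def by blast
    have "e \<in> edges G - {eps} \<or> e = e1 \<or> e = e2 \<or> e = e3"
      using e FH edges_H by auto
    then show ?thesis
    proof (elim disjE)
      assume old_e: "e \<in> edges G - {eps}"
      then have "\<pi> (src H e) = src G e" "\<pi> (tgt H e) = tgt G e"
        using old ends_ne_x unfolding \<pi>_def by auto
      moreover have "e \<in> F"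
        using same e old_e by blast
      ultimately have "linked G F (\<pi> u) (\<pi> v)"
        using uv unfolding linked_def by auto
      then show ?thesis by blast
    next
      assume "e = e1"
      then have "\<pi> u = \<pi> v"
        using uv src1 tgt1 e ends_ne_x[OF eps] unfolding \<pi>_def by auto
      then show ?thesis by simp
    next
      assume "e = e2"
      then have "\<pi> u = \<pi> v"
        using uv src2 tgt2 by auto
      then show ?thesis by simp
    next
      assume e_3: "e = e3"
      show ?thesis
      proof (cases "e1 \<in> F'")
        case True
        then have "eps \<in> F" and "\<pi> x = src G eps" and "\<pi> (tgt G eps) = tgt G eps"
          using eps_in e e_3 ends_ne_x[OF eps] unfolding \<pi>_def by auto
        then have "linked G F (\<pi> u) (\<pi> v)"
          using uv src3 tgt3 e_3 unfolding linked_def by auto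
        then show ?thesis by blast
      next
        case False
        then have "\<pi> u = \<pi> v"
          using uv src3 tgt3 e_3 ends_ne_x[OF eps] unfolding \<pi>_def by auto
        then show ?thesis by simp
      qed
    qed
  qed
  then have "connected_via G F (\<pi> a) (\<pi> b)"
    using assms(3) by (rule rtranclp_map)
  moreover have "\<pi> a = a" "\<pi> b = b"
    using a b x unfolding \<pi>_def by auto
  ultimately show ?thesis by simp
qed

lemma connected_via_H_if_connected_via_G:
  assumes "connected_via G F a b"
  shows "connected_via H F' a b"
proof -
  have "connected_via H F' u v" if step: "linked G F u v" for u v
  proof -
    obtain e where e: "e \<in> F" and uv: "src G e = u \<and> tgt G e = v \<or> src G e = v \<and> tgt G e = u"
      using step unfolding linked_def by blast
    show ?thesis
    proof (cases "e = eps")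
      case False
      then have "e \<in> F'" "src H e = src G e" "tgt H e = tgt G e"
        using same e FG old by auto
      then have "linked H F' u v"
        using uv unfolding linked_def by metis
      then show ?thesis by blast
    next
      case True
      then have "e1 \<in> F'" "e3 \<in> F'"
        using eps_in e by auto
      then have "linked H F' (src G eps) x" "linked H F' x (tgt G eps)"
        using src1 tgt1 src3 tgt3 unfolding linked_def by metis+
      then have "connected_via H F' (src G eps) (tgt G eps)"
        and "connected_via H F' (tgt G eps) (src G eps)"
        by (meson linked_sym r_into_rtranclp rtranclp_trans)+
      then show ?thesis
        using uv True by auto
    qed
  qed
  then show ?thesis
    using assms by (rule rtranclp_map[where f = id, unfolded id_apply])
qed

lemma connected_via_iff:
  assumes "a \<in> verts G" and "b \<in> verts G"
  shows "connected_via H F' a b \<longleftrightarrow> connected_via G F a b"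
  using assms connected_via_G_if_connected_via_H connected_via_H_if_connected_via_G by blast

end

lemma separates_old_iff:
  assumes "z \<in> verts G" and "a \<in> verts G" and "b \<in> verts G"
  shows "separates H z a b \<longleftrightarrow> separates G z a b"
proof -
  have "x \<noteq> z"
    using x assms(1) by blast
  then have "connected_via H (edges_avoiding H z) a b \<longleftrightarrow> connected_via G (edges_avoiding G z) a b"
    using assms(2,3) eps src1 tgt1 src3 tgt3 old
    by (intro connected_via_iff) (auto simp: edges_avoiding_def edges_H)
  then show ?thesis
    unfolding separates_def by simp
qed

lemma separates_x_iff:
  assumes "a \<in> verts G" and "b \<in> verts G"
  shows "separates H x a b \<longleftrightarrow> \<not> connected_via G (edges G - {eps}) a b"
proof -
  have "edges_avoiding H x = edges G - {eps}"
    using tgt1 src2 src3 old ends_ne_x unfolding edges_avoiding_def edges_H by auto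
  moreover have "connected_via H (edges G - {eps}) a b \<longleftrightarrow> connected_via G (edges G - {eps}) a b"
    using assms e1 by (intro connected_via_iff) (auto simp: edges_H)
  ultimately show ?thesis
    unfolding separates_def by simp
qed

lemma connected_via_remove_edge_iff:
  assumes a: "a \<in> verts G" and b: "b \<in> verts G"
  shows "f \<in> edges G - {eps} \<Longrightarrow>
      connected_via H (edges H - {f}) a b \<longleftrightarrow> connected_via G (edges G - {f}) a b"
    and "f \<in> {e1, e3} \<Longrightarrow>
      connected_via H (edges H - {f}) a b \<longleftrightarrow> connected_via G (edges G - {eps}) a b"
    and "connected_via H (edges H - {e2}) a b \<longleftrightarrow> connected_via G (edges G) a b"
proof -
  show "f \<in> edges G - {eps} \<Longrightarrow>
      connected_via H (edges H - {f}) a b \<longleftrightarrow> connected_via G (edges G - {f}) a b"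
    by (rule connected_via_iff[OF _ _ _ _ a b]) (use eps e1 e3 in \<open>auto simp: edges_H\<close>)
  show "f \<in> {e1, e3} \<Longrightarrow>
      connected_via H (edges H - {f}) a b \<longleftrightarrow> connected_via G (edges G - {eps}) a b"
    by (rule connected_via_iff[OF _ _ _ _ a b]) (use e1 e3 e13 in \<open>auto simp: edges_H\<close>)
  show "connected_via H (edges H - {e2}) a b \<longleftrightarrow> connected_via G (edges G) a b"
    by (rule connected_via_iff[OF _ _ _ _ a b]) (use eps e2 e12 e23 in \<open>auto simp: edges_H\<close>)
qed

lemma bridgeless_between_iff:
  assumes a: "a \<in> verts G" and b: "b \<in> verts G"
  shows "bridgeless_between H a b \<longleftrightarrow> bridgeless_between G a b"
proof
  assume H: "bridgeless_between H a b"
  show "bridgeless_between G a b"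
    unfolding bridgeless_between_def
  proof
    fix f assume f: "f \<in> edges G"
    show "connected_via G (edges G - {f}) a b"
    proof (cases "f = eps")
      case True
      then show ?thesis
        using H connected_via_remove_edge_iff(2)[OF a b, of e1]
        unfolding bridgeless_between_def edges_H by auto
    next
      case False
      then show ?thesis
        using H f connected_via_remove_edge_iff(1)[OF a b, of f]
        unfolding bridgeless_between_def edges_H by auto
    qed
  qed
next
  assume G: "bridgeless_between G a b"
  then have "connected_via G (edges G - {eps}) a b"
    using eps unfolding bridgeless_between_def by blast
  then have "connected_via G (edges G) a b"
    by (rule connected_via_mono[rotated]) blast
  show "bridgeless_between H a b"
    unfolding bridgeless_between_def
  proof
    fix f assume "f \<in> edges H"
    then consider "f \<in> edges G - {eps}" | "f \<in> {e1, e3}" | "f = e2"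
      using edges_H by auto
    then show "connected_via H (edges H - {f}) a b"
    proof cases
      case 1
      then show ?thesis
        using G connected_via_remove_edge_iff(1)[OF a b] unfolding bridgeless_between_def by blast
    next
      case 2
      then show ?thesis
        using \<open>connected_via G (edges G - {eps}) a b\<close> connected_via_remove_edge_iff(2)[OF a b] by blast
    next
      case 3
      then show ?thesis
        using \<open>connected_via G (edges G) a b\<close> connected_via_remove_edge_iff(3)[OF a b] by blast
    qed
  qed
qed

lemma two_pendant_loops_iff: "two_pendant_loops H \<longleftrightarrow> two_pendant_loops G"
proof
  assume "two_pendant_loops H"
  then obtain p l where pl: "p \<in> verts H" "l \<in> verts H" "p \<noteq> l"
      "indeg H p = 2" "outdeg H p = 1" "indeg H l = 2" "outdeg H l = 1"
    unfolding two_pendant_loops_def by blast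
  then have "p \<in> verts G" "l \<in> verts G"
    using in_verts_G_if_degree_ne_2_2 by simp_all
  with pl show "two_pendant_loops G"
    unfolding two_pendant_loops_def by (intro exI[of _ p] exI[of _ l]) (simp add: indeg_old outdeg_old)
next
  assume "two_pendant_loops G"
  then obtain p l where pl: "p \<in> verts G" "l \<in> verts G" "p \<noteq> l"
      "indeg G p = 2" "outdeg G p = 1" "indeg G l = 2" "outdeg G l = 1"
    unfolding two_pendant_loops_def by blast
  then show "two_pendant_loops H"
    unfolding two_pendant_loops_def
    by (intro exI[of _ p] exI[of _ l]) (simp add: verts_H indeg_old outdeg_old)
qed

lemma separated_pair_iff: "separated_pair k H \<longleftrightarrow> separated_pair k G"
proof
  assume "separated_pair k H"
  then obtain s t Z where st: "s \<in> verts H" "t \<in> verts H" "s \<noteq> t"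
      "indeg H s = 1" "outdeg H s = 2" "indeg H t = 1" "outdeg H t = 2" "bridgeless_between H s t"
    and Z: "Z \<subseteq> verts H" "k \<le> card Z" "\<forall>z\<in>Z. indeg H z = 2 \<and> outdeg H z = 2 \<and> separates H z s t"
    unfolding separated_pair_def by blast
  have sG: "s \<in> verts G" and tG: "t \<in> verts G"
    using st in_verts_G_if_degree_ne_2_2 by auto
  then have bridgeless: "bridgeless_between G s t"
    using st(8) bridgeless_between_iff by blast
  \<comment> \<open>x cannot separate s from t, for then eps would be a bridge between them.\<close>
  have "x \<notin> Z"
    using Z(3) separates_x_iff[OF sG tG] bridgeless eps unfolding bridgeless_between_def by blast
  then have ZG: "Z \<subseteq> verts G"
    using Z(1) verts_H by auto
  show "separated_pair k G"
    unfolding separated_pair_def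
    using sG tG st bridgeless ZG Z indeg_old outdeg_old separates_old_iff subsetD[OF ZG]
    by (intro exI[of _ s] exI[of _ t] exI[of _ Z]) auto
next
  assume "separated_pair k G"
  then obtain s t Z where st: "s \<in> verts G" "t \<in> verts G" "s \<noteq> t"
      "indeg G s = 1" "outdeg G s = 2" "indeg G t = 1" "outdeg G t = 2" "bridgeless_between G s t"
    and Z: "Z \<subseteq> verts G" "k \<le> card Z" "\<forall>z\<in>Z. indeg G z = 2 \<and> outdeg G z = 2 \<and> separates G z s t"
    unfolding separated_pair_def by blast
  show "separated_pair k H"
    unfolding separated_pair_def
    using st Z verts_H indeg_old outdeg_old separates_old_iff bridgeless_between_iff subsetD[OF Z(1)]
    by (intro exI[of _ s] exI[of _ t] exI[of _ Z]) auto
qed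

end

lemma simple_expansion_two_pendant_loops_iff:
  assumes "simple_expansion G eps H"
  shows "two_pendant_loops G \<longleftrightarrow> two_pendant_loops H"
proof -
  obtain x e1 e2 e3 where "expansion_step G H eps x e1 e2 e3"
    using assms by (rule simple_expansion_expansion_step)
  then show ?thesis
    by (rule expansion_step.two_pendant_loops_iff[symmetric])
qed

lemma simple_expansion_separated_pair_iff:
  assumes "simple_expansion G eps H"
  shows "separated_pair k G \<longleftrightarrow> separated_pair k H"
proof -
  obtain x e1 e2 e3 where "expansion_step G H eps x e1 e2 e3"
    using assms by (rule simple_expansion_expansion_step)
  then show ?thesis
    by (rule expansion_step.separated_pair_iff[symmetric])
qed

section \<open>Invariance under isomorphisms\<close>

locale graph_isomorphism =
  fixes G H :: dgraph and fv fe :: "nat \<Rightarrow> nat"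
  assumes wf: "wf_graph G"
    and bij_verts: "bij_betw fv (verts G) (verts H)" and bij_edges: "bij_betw fe (edges G) (edges H)"
    and ends: "\<forall>e\<in>edges G. src H (fe e) = fv (src G e) \<and> tgt H (fe e) = fv (tgt G e)"
begin

lemma ends_in_verts: "e \<in> edges G \<Longrightarrow> src G e \<in> verts G \<and> tgt G e \<in> verts G"
  using wf unfolding wf_graph_def by auto

lemma inj_verts: "inj_on fv (verts G)"
  using bij_verts by (rule bij_betw_imp_inj_on)

lemma inj_edges: "inj_on fe (edges G)"
  using bij_edges by (rule bij_betw_imp_inj_on)

lemma image_verts: "fv ` verts G = verts H"
  using bij_verts by (rule bij_betw_imp_surj_on)

lemma image_edges: "fe ` edges G = edges H"
  using bij_edges by (rule bij_betw_imp_surj_on)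

lemma eq_fv_iff: "y \<in> verts G \<Longrightarrow> z \<in> verts G \<Longrightarrow> fv y = fv z \<longleftrightarrow> y = z"
  using inj_verts by (simp add: inj_on_eq_iff)

lemma edges_with_end_image:
  assumes y: "y \<in> verts G"
    and end_map: "\<forall>e\<in>edges G. end_H (fe e) = fv (end_G e) \<and> end_G e \<in> verts G"
  shows "{e \<in> edges H. end_H e = fv y} = fe ` {e \<in> edges G. end_G e = y}"
proof (intro set_eqI iffI)
  fix e' assume "e' \<in> {e \<in> edges H. end_H e = fv y}"
  then obtain e where "e \<in> edges G" "e' = fe e" "fv (end_G e) = fv y"
    using image_edges end_map by force
  then show "e' \<in> fe ` {e \<in> edges G. end_G e = y}"
    using y end_map eq_fv_iff by blast
next
  fix e' assume "e' \<in> fe ` {e \<in> edges G. end_G e = y}"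
  then show "e' \<in> {e \<in> edges H. end_H e = fv y}"
    using end_map image_edges by auto
qed

lemma card_edges_with_end:
  assumes "y \<in> verts G"
    and "\<forall>e\<in>edges G. end_H (fe e) = fv (end_G e) \<and> end_G e \<in> verts G"
  shows "card {e \<in> edges H. end_H e = fv y} = card {e \<in> edges G. end_G e = y}"
  unfolding edges_with_end_image[OF assms]
  by (rule card_image, rule inj_on_subset[OF inj_edges]) blast

lemma indeg_image: "y \<in> verts G \<Longrightarrow> indeg H (fv y) = indeg G y"
  unfolding indeg_def using ends ends_in_verts by (intro card_edges_with_end) auto

lemma outdeg_image: "y \<in> verts G \<Longrightarrow> outdeg H (fv y) = outdeg G y"
  unfolding outdeg_def using ends ends_in_verts by (intro card_edges_with_end) auto

lemma connected_via_image:
  assumes F: "F \<subseteq> edges G" and a: "a \<in> verts G" and b: "b \<in> verts G"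
  shows "connected_via H (fe ` F) (fv a) (fv b) \<longleftrightarrow> connected_via G F a b"
proof
  define \<pi> where "\<pi> = inv_into (verts G) fv"
  have \<pi>_fv: "\<pi> (fv y) = y" if "y \<in> verts G" for y
    unfolding \<pi>_def using inj_verts that by simp
  assume "connected_via H (fe ` F) (fv a) (fv b)"
  moreover have "connected_via G F (\<pi> u) (\<pi> v)" if step: "linked H (fe ` F) u v" for u v
  proof -
    obtain e where e: "e \<in> F"
      and uv: "src H (fe e) = u \<and> tgt H (fe e) = v \<or> src H (fe e) = v \<and> tgt H (fe e) = u"
      using step unfolding linked_def by blast
    have "\<pi> (src H (fe e)) = src G e" "\<pi> (tgt H (fe e)) = tgt G e"
      using e F ends \<pi>_fv ends_in_verts by auto
    then have "linked G F (\<pi> u) (\<pi> v)"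
      using e uv unfolding linked_def by auto
    then show ?thesis by blast
  qed
  ultimately have "connected_via G F (\<pi> (fv a)) (\<pi> (fv b))"
    by (rule rtranclp_map[rotated])
  then show "connected_via G F a b"
    using \<pi>_fv a b by simp
next
  assume "connected_via G F a b"
  moreover have "connected_via H (fe ` F) (fv u) (fv v)" if step: "linked G F u v" for u v
  proof -
    have "linked H (fe ` F) (fv u) (fv v)"
      using step F ends unfolding linked_def by fastforce
    then show ?thesis by blast
  qed
  ultimately show "connected_via H (fe ` F) (fv a) (fv b)"
    by (rule rtranclp_map[rotated])
qed

lemma edges_avoiding_image:
  assumes z: "z \<in> verts G"
  shows "edges_avoiding H (fv z) = fe ` edges_avoiding G z"
proof (intro set_eqI iffI)
  fix e' assume "e' \<in> edges_avoiding H (fv z)"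
  then have e': "e' \<in> edges H" "src H e' \<noteq> fv z" "tgt H e' \<noteq> fv z"
    unfolding edges_avoiding_def by auto
  then obtain e where e: "e \<in> edges G" "e' = fe e"
    using image_edges by blast
  then have "src G e \<noteq> z" "tgt G e \<noteq> z"
    using ends e' by auto
  then show "e' \<in> fe ` edges_avoiding G z"
    unfolding edges_avoiding_def using e by blast
next
  fix e' assume "e' \<in> fe ` edges_avoiding G z"
  then obtain e where e: "e \<in> edges G" "e' = fe e" "src G e \<noteq> z" "tgt G e \<noteq> z"
    unfolding edges_avoiding_def by blast
  then have "fv (src G e) \<noteq> fv z" "fv (tgt G e) \<noteq> fv z"
    using eq_fv_iff ends_in_verts z by auto
  then show "e' \<in> edges_avoiding H (fv z)"
    unfolding edges_avoiding_def using e ends image_edges by auto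
qed

lemma edges_remove_image:
  assumes f: "f \<in> edges G"
  shows "edges H - {fe f} = fe ` (edges G - {f})"
  using f inj_edges image_edges by (auto simp: inj_on_eq_iff)

lemma separates_image:
  assumes "z \<in> verts G" and "a \<in> verts G" and "b \<in> verts G"
  shows "separates H (fv z) (fv a) (fv b) \<longleftrightarrow> separates G z a b"
  unfolding separates_def edges_avoiding_image[OF assms(1)]
  using assms by (subst connected_via_image) (auto simp: edges_avoiding_def)

lemma bridgeless_between_image:
  assumes "a \<in> verts G" and "b \<in> verts G"
  shows "bridgeless_between H (fv a) (fv b) \<longleftrightarrow> bridgeless_between G a b"
proof -
  have "connected_via H (edges H - {fe f}) (fv a) (fv b) \<longleftrightarrow> connected_via G (edges G - {f}) a b"
    if "f \<in> edges G" for f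
    using that assms by (simp add: edges_remove_image connected_via_image)
  then show ?thesis
    unfolding bridgeless_between_def image_edges[symmetric] by simp
qed

lemma two_pendant_loops_image: "two_pendant_loops G \<Longrightarrow> two_pendant_loops H"
  unfolding two_pendant_loops_def
  by (metis image_verts imageI eq_fv_iff indeg_image outdeg_image)

lemma separated_pair_image:
  assumes "separated_pair k G"
  shows "separated_pair k H"
proof -
  obtain s t Z where st: "s \<in> verts G" "t \<in> verts G" "s \<noteq> t"
      "indeg G s = 1" "outdeg G s = 2" "indeg G t = 1" "outdeg G t = 2" "bridgeless_between G s t"
    and Z: "Z \<subseteq> verts G" "k \<le> card Z" "\<forall>z\<in>Z. indeg G z = 2 \<and> outdeg G z = 2 \<and> separates G z s t"
    using assms unfolding separated_pair_def by blast
  have "card (fv ` Z) = card Z"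
    using inj_on_subset[OF inj_verts Z(1)] by (rule card_image)
  then show ?thesis
    unfolding separated_pair_def
    using st Z image_verts eq_fv_iff indeg_image outdeg_image bridgeless_between_image
      separates_image subsetD[OF Z(1)]
    by (intro exI[of _ "fv s"] exI[of _ "fv t"] exI[of _ "fv ` Z"]) auto
qed

end

lemma graph_iso_two_pendant_loops:
  assumes "wf_graph G" and "graph_iso G H" and "two_pendant_loops G"
  shows "two_pendant_loops H"
proof -
  obtain fv fe where "graph_isomorphism G H fv fe"
    using assms(1,2) unfolding graph_iso_def graph_isomorphism_def by blast
  then show ?thesis
    using assms(3) by (rule graph_isomorphism.two_pendant_loops_image)
qed

lemma graph_iso_separated_pair:
  assumes "wf_graph G" and "graph_iso G H" and "separated_pair k G"
  shows "separated_pair k H"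
proof -
  obtain fv fe where "graph_isomorphism G H fv fe"
    using assms(1,2) unfolding graph_iso_def graph_isomorphism_def by blast
  then show ?thesis
    using assms(3) by (rule graph_isomorphism.separated_pair_image)
qed

section \<open>The graph O_n\<close>

lemma wf_graph_O_graph: "wf_graph (O_graph n)"
  by (auto simp: wf_graph_def O_graph_def)

lemma O_graph_edge_cases:
  assumes "e \<in> edges (O_graph n)"
  obtains (forward) i where "i < n" "e = 2*i" | (backward) i where "i < n" "e = 2*i+1"
    | (v) "e = 2*n" | (w) "e = 2*n+1" | (a) "e = 2*n+2" | (b) "e = 2*n+3"
proof -
  have "e < 2*n + 4"
    using assms by (simp add: O_graph_def)
  then consider "e < 2*n" | "e = 2*n" | "e = 2*n+1" | "e = 2*n+2" | "e = 2*n+3"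
    by linarith
  then show ?thesis
  proof cases
    case 1
    show ?thesis
    proof (cases "even e")
      case True
      then obtain i where "e = 2*i" ..
      then show ?thesis using forward 1 by simp
    next
      case False
      then obtain i where "e = 2*i+1" ..
      then show ?thesis using backward 1 by simp
    qed
  qed (fact that)+
qed

\<comment> \<open>Stated in the Suc-normal form produced by the simplifier.\<close>
lemma O_graph_ends:
  "i < n \<Longrightarrow> src (O_graph n) (2*i) = i" "i < n \<Longrightarrow> tgt (O_graph n) (2*i) = Suc i"
  "i < n \<Longrightarrow> src (O_graph n) (Suc (2*i)) = Suc i" "i < n \<Longrightarrow> tgt (O_graph n) (Suc (2*i)) = i"
  "src (O_graph n) (2*n) = 0" "tgt (O_graph n) (2*n) = Suc n"
  "src (O_graph n) (Suc (2*n)) = Suc n" "tgt (O_graph n) (Suc (2*n)) = Suc n"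
  "src (O_graph n) (Suc (Suc (2*n))) = n" "tgt (O_graph n) (Suc (Suc (2*n))) = Suc (Suc n)"
  "src (O_graph n) (2*n+3) = Suc (Suc n)" "tgt (O_graph n) (2*n+3) = Suc (Suc n)"
  by (simp_all add: O_graph_def)

lemma separates_O_graph:
  assumes z: "0 < z" "z < n"
  shows "separates (O_graph n) z 0 n"
proof -
  \<comment> \<open>Without u_z, the vertices below z together with p are closed under adjacency.\<close>
  have "b < z \<or> b = n+1"
    if "connected_via (O_graph n) (edges_avoiding (O_graph n) z) a b" and "a < z \<or> a = n+1" for a b
    using that(1)
  proof (induction rule: rtranclp_induct)
    case base
    show ?case using that(2) .
  next
    case (step b c)
    then obtain e where e: "e \<in> edges (O_graph n)" "src (O_graph n) e \<noteq> z" "tgt (O_graph n) e \<noteq> z"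
      and bc: "src (O_graph n) e = b \<and> tgt (O_graph n) e = c \<or> src (O_graph n) e = c \<and> tgt (O_graph n) e = b"
      unfolding linked_def edges_avoiding_def by blast
    from e(1) show ?case
      by (cases rule: O_graph_edge_cases) (use e(2,3) bc step.IH z in \<open>auto simp: O_graph_ends\<close>)
  qed
  then show ?thesis
    unfolding separates_def using z by fastforce
qed

lemma bridgeless_between_O_graph: "bridgeless_between (O_graph n) 0 n"
  unfolding bridgeless_between_def
proof
  fix f
  have "connected_via (O_graph n) (edges (O_graph n) - {f}) 0 k" if "k \<le> n" for k
    using that
  proof (induction k)
    case (Suc k)
    then have k: "k < n" by simp
    have "2*k \<in> edges (O_graph n)" "Suc (2*k) \<in> edges (O_graph n)"
      using k by (simp_all add: O_graph_def)
    moreover have "src (O_graph n) (2*k) = k" "tgt (O_graph n) (2*k) = Suc k"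
      "src (O_graph n) (Suc (2*k)) = Suc k" "tgt (O_graph n) (Suc (2*k)) = k"
      using k by (simp_all add: O_graph_ends)
    ultimately have "linked (O_graph n) (edges (O_graph n) - {f}) k (Suc k)"
      unfolding linked_def by (metis Diff_iff n_not_Suc_n singletonD)
    then show ?case
      using Suc by (meson Suc_leD rtranclp.rtrancl_into_rtrancl)
  qed simp
  then show "connected_via (O_graph n) (edges (O_graph n) - {f}) 0 n"
    by simp
qed

lemma O_graph_in_edges:
  shows "0 < n \<Longrightarrow> {e \<in> edges (O_graph n). tgt (O_graph n) e = 0} = {1}"
    and "0 < n \<Longrightarrow> {e \<in> edges (O_graph n). tgt (O_graph n) e = n} = {2*n-2}"
    and "0 < z \<Longrightarrow> z < n \<Longrightarrow> {e \<in> edges (O_graph n). tgt (O_graph n) e = z} = {2*z-2, 2*z+1}"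
    and "{e \<in> edges (O_graph n). tgt (O_graph n) e = n+1} = {2*n, 2*n+1}"
    and "{e \<in> edges (O_graph n). tgt (O_graph n) e = n+2} = {2*n+2, 2*n+3}"
  by (auto simp: O_graph_def; presburger)+

lemma O_graph_out_edges:
  shows "0 < n \<Longrightarrow> {e \<in> edges (O_graph n). src (O_graph n) e = 0} = {0, 2*n}"
    and "0 < n \<Longrightarrow> {e \<in> edges (O_graph n). src (O_graph n) e = n} = {2*n-1, 2*n+2}"
    and "0 < z \<Longrightarrow> z < n \<Longrightarrow> {e \<in> edges (O_graph n). src (O_graph n) e = z} = {2*z-1, 2*z}"
    and "{e \<in> edges (O_graph n). src (O_graph n) e = n+1} = {2*n+1}"
    and "{e \<in> edges (O_graph n). src (O_graph n) e = n+2} = {2*n+3}"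
  by (auto simp: O_graph_def)

lemma two_pendant_loops_O_graph: "two_pendant_loops (O_graph n)"
proof -
  have "indeg (O_graph n) (n+1) = 2" "outdeg (O_graph n) (n+1) = 1"
    "indeg (O_graph n) (n+2) = 2" "outdeg (O_graph n) (n+2) = 1"
    unfolding indeg_def outdeg_def O_graph_in_edges O_graph_out_edges by simp_all
  moreover have "n+1 \<in> verts (O_graph n)" "n+2 \<in> verts (O_graph n)"
    by (simp_all add: O_graph_def)
  ultimately show ?thesis
    unfolding two_pendant_loops_def by (intro exI[of _ "n+1"] exI[of _ "n+2"]) simp
qed

lemma separated_pair_O_graph:
  assumes "0 < n"
  shows "separated_pair (n - 1) (O_graph n)"
proof -
  have ends: "indeg (O_graph n) 0 = 1" "outdeg (O_graph n) 0 = 2"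
    "indeg (O_graph n) n = 1" "outdeg (O_graph n) n = 2"
    unfolding indeg_def outdeg_def using assms by (simp_all add: O_graph_in_edges O_graph_out_edges)
  have inner: "indeg (O_graph n) z = 2 \<and> outdeg (O_graph n) z = 2 \<and> separates (O_graph n) z 0 n"
    if "z \<in> {1..n-1}" for z
  proof -
    from that have z: "0 < z" "z < n" by auto
    then show ?thesis
      unfolding indeg_def outdeg_def
      by (simp add: O_graph_in_edges O_graph_out_edges separates_O_graph)
  qed
  have verts: "{1..n-1} \<subseteq> verts (O_graph n)" "0 \<in> verts (O_graph n)" "n \<in> verts (O_graph n)"
    by (auto simp: O_graph_def)
  show ?thesis
    unfolding separated_pair_def
    by (rule exI[of _ 0], rule exI[of _ n], rule exI[of _ "{1..n-1}"])
      (use assms ends inner verts bridgeless_between_O_graph in simp)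
qed

theorem mainTheorem7:
  fixes n :: nat and G :: dgraph
  assumes "wf_graph G"
    and "has_rearrangement (O_graph n) G"
  shows "2*n + 4 \<le> card (edges G)"
proof -
  have pendant_loops: "two_pendant_loops G"
    using simple_expansion_two_pendant_loops_iff graph_iso_two_pendant_loops wf_graph_O_graph assms(2)
      two_pendant_loops_O_graph
    by (rule rearrangement_invariant)
  show ?thesis
  proof (cases n)
    case 0
    then show ?thesis
      using card_edges_ge_4_if_two_pendant_loops[OF assms(1) pendant_loops] by simp
  next
    case (Suc k)
    have "separated_pair k (O_graph n)"
      using separated_pair_O_graph[of n] Suc by simp
    with simple_expansion_separated_pair_iff graph_iso_separated_pair wf_graph_O_graph assms(2)
    have "separated_pair k G"
      by (rule rearrangement_invariant)
    then have "2 * k + 6 \<le> card (edges G)"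
      by (rule card_edges_ge_if_separated_pair[OF assms(1) pendant_loops])
    then show ?thesis
      using Suc by simp
  qed
qed

end
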